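(* In the setting described in the context, the map $\varphi$ defined by $\varphi(d)(x,y)=d(x,\cdot)+d(y,\cdot)-d(x,y)-d(\cdot,\cdot)+m$ is a bijection from the set of metrics on $A$ that belong to $\mathcal{B}_2$ onto the set of $\Sigma_m$-proximities on $A$, with inverse $\psi(\sigma)(x,y)=\tfrac12(\sigma(x,x)+\sigma(y,y))-\sigma(x,y)$.
   Context: $A$ is a nonempty set (possibly infinite); $m\in\mathbb{R}$. A metric on $A$ is a function $d:A^2\to\mathbb{R}$ such that for all $x,y,z\in A$: $d(x,y)=0$ iff $x=y$, and $d(x,y)+d(x,z)-d(y,z)\ge0$. $\mathcal{B}_1$ is a set of functions $A\to\mathbb{R}$ forming a real linear space containing all constant functions, and $\mu:\mathcal{B}_1\to\mathbb{R}$ is a linear functional with $\mu(c)=c$ for every constant function $c$ and monotone: if $f,g\in\mathcal{B}_1$ and $f\ge g$ pointwise, then $\mu(f)\ge\mu(g)$. For $f:A^2\to\mathbb{R}$ such that $y\mapsto f(x,y)$ lies in $\mathcal{B}_1$ for every $x$, write $f(x,\cdot)=\mu(y\mapsto f(x,y))$. $\mathcal{B}_2$ is a set of functions $A^2\to\mathbb{R}$ forming a real linear space that contains all constant functions and all functions $(x,y)\mapsto h(x)$ and $(x,y)\mapsto h(y)$ with $h\in\mathcal{B}_1$, and such that for every $f\in\mathcal{B}_2$: $y\mapsto f(x,y)\in\mathcal{B}_1$ for every $x$, $x\mapsto f(x,\cdot)\in\mathcal{B}_1$, and $x\mapsto f(x,x)\in\mathcal{B}_1$. For a symmetric $d\in\mathcal{B}_2$,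 $d(\cdot,\cdot)=\mu(x\mapsto d(x,\cdot))$. A function $\sigma\in\mathcal{B}_2$ is a $\Sigma_m$-proximity on $A$ if for all $x,y,z\in A$: (1) $\sigma(x,\cdot)=m$; (2) $\sigma(x,y)+\sigma(x,z)-\sigma(y,z)\le\sigma(x,x)$, with strict inequality whenever $z=y$ and $x\ne y$. *)

theory Defs
  imports Main "HOL.Real"
begin

text \<open>The set A is modelled by the (nonempty) type 'a.\<close>

definition metric_on :: "('a \<Rightarrow> 'a \<Rightarrow> real) \<Rightarrow> bool" where
  "metric_on d \<longleftrightarrow> (\<forall>x y. d x y = 0 \<longleftrightarrow> x = y) \<and>
     (\<forall>x y z. d x y + d x z - d y z \<ge> 0)"

definition lin_space1 :: "('a \<Rightarrow> real) set \<Rightarrow> bool" where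
  "lin_space1 B \<longleftrightarrow> (\<forall>f\<in>B. \<forall>g\<in>B. (\<lambda>x. f x + g x) \<in> B) \<and>
     (\<forall>c. \<forall>f\<in>B. (\<lambda>x. c * f x) \<in> B) \<and> (\<forall>c. (\<lambda>x. c) \<in> B)"

definition lin_space2 :: "('a \<Rightarrow> 'a \<Rightarrow> real) set \<Rightarrow> bool" where
  "lin_space2 B \<longleftrightarrow> (\<forall>f\<in>B. \<forall>g\<in>B. (\<lambda>x y. f x y + g x y) \<in> B) \<and>
     (\<forall>c. \<forall>f\<in>B. (\<lambda>x y. c * f x y) \<in> B) \<and> (\<forall>c. (\<lambda>x y. c) \<in> B)"

definition mean_on :: "('a \<Rightarrow> real) set \<Rightarrow> (('a \<Rightarrow> real) \<Rightarrow> real) \<Rightarrow> bool" where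
  "mean_on B \<mu> \<longleftrightarrow> (\<forall>f\<in>B. \<forall>g\<in>B. \<mu> (\<lambda>x. f x + g x) = \<mu> f + \<mu> g) \<and>
     (\<forall>c. \<forall>f\<in>B. \<mu> (\<lambda>x. c * f x) = c * \<mu> f) \<and>
     (\<forall>c. \<mu> (\<lambda>x. c) = c) \<and>
     (\<forall>f\<in>B. \<forall>g\<in>B. (\<forall>x. f x \<ge> g x) \<longrightarrow> \<mu> f \<ge> \<mu> g)"

text \<open>f(x,.) = mu (y |-> f(x,y)).\<close>
definition part_mean :: "(('a \<Rightarrow> real) \<Rightarrow> real) \<Rightarrow> ('a \<Rightarrow> 'a \<Rightarrow> real) \<Rightarrow> 'a \<Rightarrow> real" where
  "part_mean \<mu> f x = \<mu> (\<lambda>y. f x y)"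

text \<open>f(.,.) = mu (x |-> f(x,.)).\<close>
definition full_mean :: "(('a \<Rightarrow> real) \<Rightarrow> real) \<Rightarrow> ('a \<Rightarrow> 'a \<Rightarrow> real) \<Rightarrow> real" where
  "full_mean \<mu> f = \<mu> (\<lambda>x. part_mean \<mu> f x)"

definition compatible_B2 :: "('a \<Rightarrow> real) set \<Rightarrow> (('a \<Rightarrow> real) \<Rightarrow> real) \<Rightarrow>
    ('a \<Rightarrow> 'a \<Rightarrow> real) set \<Rightarrow> bool" where
  "compatible_B2 B1 \<mu> B2 \<longleftrightarrow> lin_space2 B2 \<and>
     (\<forall>h\<in>B1. (\<lambda>x y. h x) \<in> B2 \<and> (\<lambda>x y. h y) \<in> B2) \<and>
     (\<forall>f\<in>B2. (\<forall>x. (\<lambda>y. f x y) \<in> B1) \<and> (\<lambda>x. part_mean \<mu> f x) \<in> B1 \<and> (\<lambda>x. f x x) \<in> B1)"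

definition sigma_proximity :: "(('a \<Rightarrow> real) \<Rightarrow> real) \<Rightarrow> ('a \<Rightarrow> 'a \<Rightarrow> real) set \<Rightarrow> real \<Rightarrow>
    ('a \<Rightarrow> 'a \<Rightarrow> real) \<Rightarrow> bool" where
  "sigma_proximity \<mu> B2 m \<sigma> \<longleftrightarrow> \<sigma> \<in> B2 \<and>
     (\<forall>x. part_mean \<mu> \<sigma> x = m) \<and>
     (\<forall>x y z. \<sigma> x y + \<sigma> x z - \<sigma> y z \<le> \<sigma> x x) \<and>
     (\<forall>x y. x \<noteq> y \<longrightarrow> \<sigma> x y + \<sigma> x y - \<sigma> y y < \<sigma> x x)"

definition phi_map :: "(('a \<Rightarrow> real) \<Rightarrow> real) \<Rightarrow> real \<Rightarrow> ('a \<Rightarrow> 'a \<Rightarrow> real) \<Rightarrow> ('a \<Rightarrow> 'a \<Rightarrow> real)" where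
  "phi_map \<mu> m d = (\<lambda>x y. part_mean \<mu> d x + part_mean \<mu> d y - d x y - full_mean \<mu> d + m)"

definition psi_map :: "('a \<Rightarrow> 'a \<Rightarrow> real) \<Rightarrow> ('a \<Rightarrow> 'a \<Rightarrow> real)" where
  "psi_map \<sigma> = (\<lambda>x y. (\<sigma> x x + \<sigma> y y) / 2 - \<sigma> x y)"

end

theory Submission
  imports Defs
begin

text \<open>Both maps are affine in the kernel. \<open>\<phi>(d)\<close> has the shape \<open>D x + D y - d x y + c\<close>, and
  for every kernel of that shape \<open>\<sigma> x y + \<sigma> x z - \<sigma> y z - \<sigma> x x = d x x + d y z - d x y - d x z\<close>,
  while \<open>\<psi>(\<sigma>) x y + \<psi>(\<sigma>) x z - \<psi>(\<sigma>) y z = \<sigma> x x + \<sigma> y z - \<sigma> x y - \<sigma> x z\<close>. So the triangle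
  inequality of \<open>d\<close> and inequality (2) for \<open>\<sigma>\<close> translate into each other, and positivity of
  \<open>d\<close> off the diagonal corresponds to the strict case of (2). The normalisation
  \<open>\<sigma>(x,\<cdot>) = m\<close> and the identity \<open>\<phi>(\<psi>(\<sigma>)) = \<sigma>\<close> come from averaging these affine expressions,
  which uses only linearity and normalisation of \<open>\<mu>\<close>, never its monotonicity.\<close>

lemma lin_space1_add: "lin_space1 B \<Longrightarrow> f \<in> B \<Longrightarrow> g \<in> B \<Longrightarrow> (\<lambda>x. f x + g x) \<in> B"
  and lin_space1_scale: "lin_space1 B \<Longrightarrow> f \<in> B \<Longrightarrow> (\<lambda>x. c * f x) \<in> B"
  and lin_space1_const: "lin_space1 B \<Longrightarrow> (\<lambda>x. c) \<in> B"
  unfolding lin_space1_def by blast+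

lemma lin_space2_add: "lin_space2 B \<Longrightarrow> f \<in> B \<Longrightarrow> g \<in> B \<Longrightarrow> (\<lambda>x y. f x y + g x y) \<in> B"
  and lin_space2_scale: "lin_space2 B \<Longrightarrow> f \<in> B \<Longrightarrow> (\<lambda>x y. c * f x y) \<in> B"
  and lin_space2_const: "lin_space2 B \<Longrightarrow> (\<lambda>x y. c) \<in> B"
  unfolding lin_space2_def by blast+

lemma mean_on_add: "mean_on B \<mu> \<Longrightarrow> f \<in> B \<Longrightarrow> g \<in> B \<Longrightarrow> \<mu> (\<lambda>x. f x + g x) = \<mu> f + \<mu> g"
  and mean_on_scale: "mean_on B \<mu> \<Longrightarrow> f \<in> B \<Longrightarrow> \<mu> (\<lambda>x. c * f x) = c * \<mu> f"
  and mean_on_const: "mean_on B \<mu> \<Longrightarrow> \<mu> (\<lambda>x. c) = c"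
  unfolding mean_on_def by blast+

lemma metric_on_diag_zero: "metric_on d \<Longrightarrow> d x x = 0"
  unfolding metric_on_def by blast

lemma metric_on_pos:
  assumes "metric_on d" "x \<noteq> y"
  shows "d x y > 0"
proof -
  have "d x y + d x y - d y y \<ge> 0" "d x y \<noteq> 0"
    using assms unfolding metric_on_def by blast+
  then show ?thesis
    using metric_on_diag_zero[OF assms(1)] by simp
qed

lemma proximity_ineqs_of_metric:
  assumes "metric_on d" and \<sigma>: "\<sigma> = (\<lambda>x y. D x + D y - d x y + c)"
  shows "\<sigma> x y + \<sigma> x z - \<sigma> y z \<le> \<sigma> x x"
    and "x \<noteq> y \<Longrightarrow> \<sigma> x y + \<sigma> x y - \<sigma> y y < \<sigma> x x"
proof -
  have "d x y + d x z - d y z \<ge> 0"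
    using assms(1) unfolding metric_on_def by blast
  then show "\<sigma> x y + \<sigma> x z - \<sigma> y z \<le> \<sigma> x x"
    using metric_on_diag_zero[OF assms(1)] by (simp add: \<sigma>)
  show "\<sigma> x y + \<sigma> x y - \<sigma> y y < \<sigma> x x" if "x \<noteq> y"
    using metric_on_pos[OF assms(1) that] metric_on_diag_zero[OF assms(1)] by (simp add: \<sigma>)
qed

lemma metric_on_psi_map:
  assumes "sigma_proximity \<mu> B2 m \<sigma>"
  shows "metric_on (psi_map \<sigma>)"
  unfolding metric_on_def psi_map_def
proof (intro conjI allI)
  fix x y z
  show "((\<sigma> x x + \<sigma> y y) / 2 - \<sigma> x y = 0) = (x = y)"
    using assms unfolding sigma_proximity_def by (cases "x = y") force+
  have "\<sigma> x y + \<sigma> x z - \<sigma> y z \<le> \<sigma> x x"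
    using assms unfolding sigma_proximity_def by blast
  then show "0 \<le> (\<sigma> x x + \<sigma> y y) / 2 - \<sigma> x y + ((\<sigma> x x + \<sigma> z z) / 2 - \<sigma> x z)
      - ((\<sigma> y y + \<sigma> z z) / 2 - \<sigma> y z)"
    by (simp add: field_simps)
qed

lemma phi_map_eq:
  "phi_map \<mu> m d = (\<lambda>x y. part_mean \<mu> d x + part_mean \<mu> d y - d x y + (m - full_mean \<mu> d))"
  unfolding phi_map_def by (simp add: fun_eq_iff)

lemma psi_map_phi_map: "(\<And>x. d x x = 0) \<Longrightarrow> psi_map (phi_map \<mu> m d) = d"
  unfolding psi_map_def phi_map_def by (simp add: fun_eq_iff field_simps)

locale mean_setting =
  fixes B1 :: "('a \<Rightarrow> real) set" and \<mu> :: "('a \<Rightarrow> real) \<Rightarrow> real"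
    and B2 :: "('a \<Rightarrow> 'a \<Rightarrow> real) set"
  assumes lin_space1: "lin_space1 B1"
    and mean: "mean_on B1 \<mu>"
    and compatible: "compatible_B2 B1 \<mu> B2"
begin

lemma row_in_B1: "f \<in> B2 \<Longrightarrow> (\<lambda>y. f x y) \<in> B1"
  and part_mean_in_B1: "f \<in> B2 \<Longrightarrow> part_mean \<mu> f \<in> B1"
  and diag_in_B1: "f \<in> B2 \<Longrightarrow> (\<lambda>x. f x x) \<in> B1"
  using compatible unfolding compatible_B2_def by auto

lemma mean_affine:
  assumes "f \<in> B1" "g \<in> B1"
  shows "\<mu> (\<lambda>x. a * f x + b * g x + c) = a * \<mu> f + b * \<mu> g + c"
proof -
  have af: "(\<lambda>x. a * f x) \<in> B1" and bg: "(\<lambda>x. b * g x) \<in> B1"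
    using assms lin_space1_scale[OF lin_space1] by blast+
  have "\<mu> (\<lambda>x. a * f x + b * g x + c) = \<mu> (\<lambda>x. a * f x + b * g x) + c"
    using mean_on_add[OF mean lin_space1_add[OF lin_space1 af bg] lin_space1_const[OF lin_space1]]
    by (simp add: mean_on_const[OF mean])
  also have "\<dots> = a * \<mu> f + b * \<mu> g + c"
    using mean_on_add[OF mean af bg] mean_on_scale[OF mean] assms by simp
  finally show ?thesis .
qed

lemma symmetric_affine_in_B2:
  assumes "h \<in> B1" "f \<in> B2"
  shows "(\<lambda>x y. a * (h x + h y) + b * f x y + c) \<in> B2"
proof -
  have L: "lin_space2 B2" and "(\<lambda>x y. h x) \<in> B2" "(\<lambda>x y. h y) \<in> B2"
    using compatible assms(1) unfolding compatible_B2_def by blast+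
  then have "(\<lambda>x y. h x + h y) \<in> B2"
    by (rule lin_space2_add)
  then have "(\<lambda>x y. a * (h x + h y) + b * f x y) \<in> B2"
    using lin_space2_add[OF L lin_space2_scale[OF L] lin_space2_scale[OF L assms(2)]] by simp
  then show ?thesis
    using lin_space2_add[OF L _ lin_space2_const[OF L]] by simp
qed

lemma sigma_proximity_phi_map:
  assumes "metric_on d" "d \<in> B2"
  shows "sigma_proximity \<mu> B2 m (phi_map \<mu> m d)"
proof -
  let ?D = "part_mean \<mu> d"
  have D: "?D \<in> B1"
    using part_mean_in_B1[OF assms(2)] .
  have "(\<lambda>x y. 1 * (?D x + ?D y) + (-1) * d x y + (m - full_mean \<mu> d)) \<in> B2"
    using symmetric_affine_in_B2[OF D assms(2)] .
  then have in_B2: "phi_map \<mu> m d \<in> B2"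
    by (simp add: phi_map_eq)
  have "part_mean \<mu> (phi_map \<mu> m d) x = m" for x
  proof -
    have "part_mean \<mu> (phi_map \<mu> m d) x
        = \<mu> (\<lambda>y. 1 * ?D y + (-1) * d x y + (?D x - full_mean \<mu> d + m))"
      unfolding part_mean_def phi_map_def
      by (rule arg_cong[where f = \<mu>]) (simp add: fun_eq_iff algebra_simps)
    also have "\<dots> = \<mu> ?D - ?D x + (?D x - full_mean \<mu> d + m)"
      using mean_affine[OF D row_in_B1[OF assms(2)], of 1 "-1"] by (simp add: part_mean_def)
    finally show ?thesis
      by (simp add: full_mean_def)
  qed
  with in_B2 proximity_ineqs_of_metric[OF assms(1) phi_map_eq] show ?thesis
    unfolding sigma_proximity_def by blast
qed

lemma psi_map_in_B2:
  assumes "\<sigma> \<in> B2"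
  shows "psi_map \<sigma> \<in> B2"
proof -
  have "(\<lambda>x y. (1/2) * (\<sigma> x x + \<sigma> y y) + (-1) * \<sigma> x y + 0) \<in> B2"
    using symmetric_affine_in_B2[OF diag_in_B1[OF assms] assms] .
  then show ?thesis
    unfolding psi_map_def by simp
qed

lemma phi_map_psi_map:
  assumes "\<sigma> \<in> B2" and rows: "\<And>x. part_mean \<mu> \<sigma> x = m"
  shows "phi_map \<mu> m (psi_map \<sigma>) = \<sigma>"
proof -
  let ?g = "\<lambda>x. \<sigma> x x"
  have g: "?g \<in> B1"
    using diag_in_B1[OF assms(1)] .
  have D: "part_mean \<mu> (psi_map \<sigma>) x = \<mu> ?g / 2 - m + \<sigma> x x / 2" for x
  proof -
    have "part_mean \<mu> (psi_map \<sigma>) x = \<mu> (\<lambda>y. (1/2) * ?g y + (-1) * \<sigma> x y + \<sigma> x x / 2)"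
      unfolding part_mean_def psi_map_def
      by (rule arg_cong[where f = \<mu>]) (simp add: fun_eq_iff algebra_simps)
    also have "\<dots> = \<mu> ?g / 2 - m + \<sigma> x x / 2"
      using mean_affine[OF g row_in_B1[OF assms(1)], of "1/2" "-1"] rows[of x]
      by (simp add: part_mean_def)
    finally show ?thesis .
  qed
  have "full_mean \<mu> (psi_map \<sigma>) = \<mu> (\<lambda>x. (1/2) * ?g x + 0 * ?g x + (\<mu> ?g / 2 - m))"
    unfolding full_mean_def D
    by (rule arg_cong[where f = \<mu>]) (simp add: fun_eq_iff algebra_simps)
  also have "\<dots> = \<mu> ?g - m"
    using mean_affine[OF g g, of "1/2" 0] by simp
  finally have "full_mean \<mu> (psi_map \<sigma>) = \<mu> ?g - m" .
  then show ?thesis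
    unfolding phi_map_def D by (simp add: fun_eq_iff psi_map_def field_simps)
qed

end

theorem theorem1:
  fixes B1 :: "('a \<Rightarrow> real) set" and \<mu> :: "('a \<Rightarrow> real) \<Rightarrow> real"
    and B2 :: "('a \<Rightarrow> 'a \<Rightarrow> real) set" and m :: real
  assumes "lin_space1 B1" and "mean_on B1 \<mu>" and "compatible_B2 B1 \<mu> B2"
  shows "bij_betw (phi_map \<mu> m) {d. metric_on d \<and> d \<in> B2} {\<sigma>. sigma_proximity \<mu> B2 m \<sigma>}
    \<and> (\<forall>\<sigma>. sigma_proximity \<mu> B2 m \<sigma> \<longrightarrow>
          psi_map \<sigma> \<in> {d. metric_on d \<and> d \<in> B2} \<and> phi_map \<mu> m (psi_map \<sigma>) = \<sigma>)
    \<and> (\<forall>d. metric_on d \<and> d \<in> B2 \<longrightarrow> psi_map (phi_map \<mu> m d) = d)"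
proof -
  interpret mean_setting B1 \<mu> B2
    using assms by unfold_locales
  have phi: "sigma_proximity \<mu> B2 m (phi_map \<mu> m d) \<and> psi_map (phi_map \<mu> m d) = d"
    if "metric_on d" "d \<in> B2" for d
    using sigma_proximity_phi_map[OF that] psi_map_phi_map metric_on_diag_zero[OF that(1)]
    by metis
  have psi: "psi_map \<sigma> \<in> {d. metric_on d \<and> d \<in> B2} \<and> phi_map \<mu> m (psi_map \<sigma>) = \<sigma>"
    if "sigma_proximity \<mu> B2 m \<sigma>" for \<sigma>
  proof -
    have "\<sigma> \<in> B2" "\<And>x. part_mean \<mu> \<sigma> x = m"
      using that unfolding sigma_proximity_def by blast+
    then show ?thesis
      using metric_on_psi_map[OF that] psi_map_in_B2 phi_map_psi_map by blast
  qed
  have "bij_betw (phi_map \<mu> m) {d. metric_on d \<and> d \<in> B2} {\<sigma>. sigma_proximity \<mu> B2 m \<sigma>}"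
    by (rule bij_betw_byWitness[where f' = psi_map]) (use phi psi in auto)
  with phi psi show ?thesis
    by blast
qed

end
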